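(* Let $k,l,m$ be positive integers, $n=(l+1)k$, and let $A\in\mathbb{R}^{m\times n}$ have $2k$-restricted isometry constant $\delta_{2k}$. Let $x\in\mathbb{R}^n$, $\epsilon\ge0$, $e\in\mathbb{R}^m$ with $\|e\|_2\le\epsilon$, $y=Ax+e$, let $p\in(0,1)$, let $x^{\star}$ be a solution of $\min_{\gamma}\|\gamma\|_p$ subject to $\|y-A\gamma\|_2\le\epsilon$, and let $h=x-x^{\star}$. Let $T_0=\{1,\dots,k\}$, $T_0^c=\{k+1,\dots,n\}$, and let $T_1,\dots,T_l$ be the partition of $T_0^c$ into consecutive blocks of size $k$ after ordering the indices of $T_0^c$ so that $|h_j|$ is non-increasing (so $T_1$ carries the $k$ largest entries of $h$ in magnitude on $T_0^c$, $T_2$ the next $k$, etc.). Let $t\in[0,1]$ satisfy $\|h_{T_1}\|_p^p=t\|h_{T_0^c}\|_p^p$. Then $$\Big\|\sum_{i=2}^lAh_{T_i}\Big\|_2^2\le C_1(t,p)k^{1-\frac2p}\|h_{T_0^c}\|_p^2,\qquad C_1(t,p)=\begin{cases}(1-t)t^{\frac2p-1}+2g(p)\delta_{2k}, & p\in(0,p^{\star}],\\ (1-t)t^{\frac2p-1}+2^{2-\frac2p}\delta_{2k}, & p\in(p^{\star},1).\end{cases}$$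
   Context: For $1\le s\le n$, the $s$-restricted isometry constant $\delta_s$ of $A$ is the smallest constant such that $(1-\delta_s)\|z\|_2^2\le\|Az\|_2^2\le(1+\delta_s)\|z\|_2^2$ for all $s$-sparse $z\in\mathbb{R}^n$. For $p\in(0,1)$, $\|\gamma\|_p=(\sum_i|\gamma_i|^p)^{1/p}$. For a vector $v$ and index set $T$, $v_T$ is the vector equal to $v$ on $T$ and zero elsewhere. $g(p)=\frac{p}{2}(1-\frac{p}{2})^{\frac{2}{p}-1}$. $p^{\star}\approx0.45418$ is the unique solution in $(0,1]$ of $(\frac{p}{2})^{1/2}(2-p)^{\frac1p-\frac12}=1$. *)

theory Defs
  imports Complex_Main
begin

text \<open>Vectors in R^n are functions nat => real of which only the coordinates
  0..n-1 matter (0-based indexing); an m x n matrix is nat => nat => real,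
  of which only entries (i,j) with i < m, j < n matter.\<close>

definition matvec :: "(nat \<Rightarrow> nat \<Rightarrow> real) \<Rightarrow> nat \<Rightarrow> (nat \<Rightarrow> real) \<Rightarrow> (nat \<Rightarrow> real)" where
  "matvec A n z = (\<lambda>i. \<Sum>j<n. A i j * z j)"

definition norm2sq :: "nat \<Rightarrow> (nat \<Rightarrow> real) \<Rightarrow> real" where
  "norm2sq d v = (\<Sum>i<d. (v i)^2)"

definition norm2 :: "nat \<Rightarrow> (nat \<Rightarrow> real) \<Rightarrow> real" where
  "norm2 d v = sqrt (norm2sq d v)"

definition pnorm :: "real \<Rightarrow> nat \<Rightarrow> (nat \<Rightarrow> real) \<Rightarrow> real" where
  "pnorm p d v = (\<Sum>i<d. \<bar>v i\<bar> powr p) powr (1 / p)"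

definition restr :: "nat set \<Rightarrow> (nat \<Rightarrow> real) \<Rightarrow> (nat \<Rightarrow> real)" where
  "restr T v = (\<lambda>i. if i \<in> T then v i else 0)"

definition sparse :: "nat \<Rightarrow> nat \<Rightarrow> (nat \<Rightarrow> real) \<Rightarrow> bool" where
  "sparse s n z \<longleftrightarrow> card {j. j < n \<and> z j \<noteq> 0} \<le> s"

definition ric :: "(nat \<Rightarrow> nat \<Rightarrow> real) \<Rightarrow> nat \<Rightarrow> nat \<Rightarrow> nat \<Rightarrow> real" where
  "ric A m n s = Inf {\<delta>. \<forall>z. sparse s n z \<longrightarrow>
       (1 - \<delta>) * norm2sq n z \<le> norm2sq m (matvec A n z) \<and>
       norm2sq m (matvec A n z) \<le> (1 + \<delta>) * norm2sq n z}"

definition gfun :: "real \<Rightarrow> real" where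
  "gfun p = p / 2 * (1 - p / 2) powr (2 / p - 1)"

definition pstar :: real where
  "pstar = (THE p. 0 < p \<and> p \<le> 1 \<and> (p / 2) powr (1/2) * (2 - p) powr (1 / p - 1/2) = 1)"

definition C1 :: "real \<Rightarrow> real \<Rightarrow> real \<Rightarrow> real" where
  "C1 \<delta> t p = (if p \<le> pstar
      then (1 - t) * t powr (2 / p - 1) + 2 * gfun p * \<delta>
      else (1 - t) * t powr (2 / p - 1) + 2 powr (2 - 2 / p) * \<delta>)"

end

theory Submission
  imports Defs "HOL-Analysis.Convex"
begin

text \<open>
  Let M_i be the p-mass of the block T_i and S the p-mass of h on T_0^c. Since the blocks are
  sorted, every entry of T_i satisfies |h_j|^p <= M_(i-1)/k, so that
  ||h_(T_i)||_2^2 <= (M_(i-1)/k)^(2/p-1) M_i. Polarizing the RIP gives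
  |<Au,Av>| <= delta ||u|| ||v|| for disjointly supported k-sparse u and v, hence
  ||sum_(i>=2) A h_(T_i)||^2 <= sum ||h_(T_i)||^2 + delta (sum ||h_(T_i)||)^2.
  As M_(i-1) <= M_1 = t S, the first sum is at most (1-t) t^(2/p-1) k^(1-2/p) S^(2/p).
  For the second, Cauchy-Schwarz together with M_(i-1) <= min(t, 1-t) S for i >= 3 leaves the factor
  (1-t) (t^(2/p-1) + min(t,1-t)^(2/p-2) (1-t)) <= max (g(p) + 2^(-2/p)) (2^(2-2/p)),
  which is at most 2g(p) for p <= p* and at most 2^(2-2/p) otherwise: p* is exactly where
  2g(p) and 2^(2-2/p) cross.
\<close>

section \<open>The constant\<close>

lemma mult_powr_le_gfun:
  fixes p t :: real
  assumes "0 < p" "p < 2" "0 \<le> t" "t \<le> 1"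
  shows "(1 - t) * t powr (2/p - 1) \<le> gfun p"
proof (cases "t = 0 \<or> t = 1")
  case True
  then show ?thesis using assms by (auto simp: gfun_def)
next
  case False
  hence t: "0 < t" "t < 1" using assms by auto
  define a where "a = t / (1 - p/2)"
  define b where "b = (1 - t) / (p/2)"
  have a: "a > 0" and b: "b > 0" using t assms by (auto simp: a_def b_def)
  \<comment> \<open>weighted AM-GM with weights \<open>1 - p/2\<close> and \<open>p/2\<close>\<close>
  have "a powr (1 - p/2) * b powr (p/2) \<le> (1 - p/2) * a + (p/2) * b"
    by (rule Youngs_inequality_0) (use assms a b in auto)
  also have "\<dots> = 1" using assms by (simp add: a_def b_def field_simps)
  finally have "(a powr (1 - p/2) * b powr (p/2)) powr (2/p) \<le> 1"
    using a b assms by (intro powr_le1) auto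
  moreover have "(1 - p/2) * (2/p) = 2/p - 1" "(p/2) * (2/p) = 1" using assms by (auto simp: field_simps)
  hence "(a powr (1 - p/2) * b powr (p/2)) powr (2/p) = a powr (2/p - 1) * b"
    using a b by (simp add: powr_mult powr_powr)
  ultimately have ab: "a powr (2/p - 1) * b \<le> 1" by simp
  have c: "(1 - p/2) powr (2/p - 1) > 0" using assms by simp
  have "a powr (2/p - 1) = t powr (2/p - 1) / (1 - p/2) powr (2/p - 1)"
    unfolding a_def using t assms by (simp add: powr_divide)
  with ab have "t powr (2/p - 1) / (1 - p/2) powr (2/p - 1) * ((1 - t) / (p/2)) \<le> 1"
    by (simp add: b_def)
  hence "t powr (2/p - 1) * (1 - t) \<le> (1 - p/2) powr (2/p - 1) * (p/2)"
    using c assms by (simp add: field_simps)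
  thus ?thesis unfolding gfun_def by (metis mult.commute)
qed

definition pstar_log :: "real \<Rightarrow> real" where
  "pstar_log p = (1/2) * (ln p - ln 2) + (inverse p - 1/2) * ln (2 - p)"

lemma exp_pstar_log:
  assumes "0 < p" "p < 2"
  shows "exp (pstar_log p) = (p/2) powr (1/2) * (2 - p) powr (1/p - 1/2)"
  using assms by (simp add: pstar_log_def exp_add powr_def ln_div inverse_eq_divide mult.commute)

lemma has_real_derivative_pstar_log:
  assumes "0 < x" "x < 2"
  shows "(pstar_log has_real_derivative - ln (2 - x) / x^2) (at x)"
  unfolding pstar_log_def
  apply (intro derivative_eq_intros)
  apply (use assms in simp_all)
  apply (use assms in \<open>simp add: field_simps power2_eq_square\<close>)
  done

lemma pstar_log_strict_decreasing:
  assumes "0 < a" "a < b" "b \<le> 1"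
  shows "pstar_log b < pstar_log a"
proof (rule DERIV_neg_imp_decreasing_open[OF \<open>a < b\<close>])
  fix x assume x: "a < x" "x < b"
  show "\<exists>y. (pstar_log has_real_derivative y) (at x) \<and> y < 0"
  proof (intro exI conjI)
    show "(pstar_log has_real_derivative - ln (2 - x) / x^2) (at x)"
      using x assms by (intro has_real_derivative_pstar_log) auto
    show "- ln (2 - x) / x^2 < 0" using x assms by simp
  qed
next
  show "continuous_on {a..b} pstar_log"
    unfolding pstar_log_def using assms by (intro continuous_intros) auto
qed

lemma pstar_log_root_exists: "\<exists>x. 1/4 \<le> x \<and> x \<le> 1 \<and> pstar_log x = 0"
proof -
  have "ln ((7/4::real)^7) > ln 8"
    by (subst ln_less_cancel_iff) (auto simp: power_divide)
  hence "7 * ln (7/4::real) > 3 * ln 2"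
    using ln_realpow[of "7/4::real" 7] ln_realpow[of "2::real" 3] by simp
  moreover have "ln (4::real) = 2 * ln 2" using ln_realpow[of 2 2] by simp
  ultimately have "pstar_log (1/4) > 0"
    by (simp add: pstar_log_def ln_div)
  moreover have "pstar_log 1 < 0" by (simp add: pstar_log_def)
  ultimately have "\<exists>x\<ge>1/4. x \<le> 1 \<and> pstar_log x = 0"
    unfolding pstar_log_def by (intro IVT2' continuous_intros) auto
  thus ?thesis by auto
qed

lemma pstar_root: "0 < pstar" "pstar \<le> 1" "pstar_log pstar = 0"
proof -
  have root_iff: "(q/2) powr (1/2) * (2 - q) powr (1/q - 1/2) = 1 \<longleftrightarrow> pstar_log q = 0"
    if "0 < q" "q \<le> 1" for q
    using exp_pstar_log[of q] that by auto
  obtain x where x: "1/4 \<le> x" "x \<le> 1" "pstar_log x = 0"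
    using pstar_log_root_exists by blast
  have "pstar = x"
    unfolding pstar_def
  proof (rule the_equality)
    show "0 < x \<and> x \<le> 1 \<and> (x/2) powr (1/2) * (2 - x) powr (1/x - 1/2) = 1"
      using x root_iff[of x] by simp
  next
    fix y :: real assume "0 < y \<and> y \<le> 1 \<and> (y/2) powr (1/2) * (2 - y) powr (1/y - 1/2) = 1"
    hence y: "0 < y" "y \<le> 1" "pstar_log y = 0" using root_iff[of y] by auto
    show "y = x"
      using pstar_log_strict_decreasing[of y x] pstar_log_strict_decreasing[of x y] x y
      by (cases y x rule: linorder_cases) auto
  qed
  thus "0 < pstar" "pstar \<le> 1" "pstar_log pstar = 0" using x by auto
qed

lemma two_gfun_eq:
  assumes "0 < p" "p < 2"
  shows "2 * gfun p = 2 powr (2 - 2/p) * exp (2 * pstar_log p)"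
proof -
  have "exp (2 * pstar_log p) = (p/2) * (2 - p) powr (2/p - 1)"
    using assms by (simp add: pstar_log_def exp_add exp_diff powr_def inverse_eq_divide algebra_simps)
  moreover have "(1 - p/2) powr (2/p - 1) = (2 - p) powr (2/p - 1) / 2 powr (2/p - 1)"
    using assms powr_divide[of "2 - p" 2 "2/p - 1"] by (simp add: diff_divide_distrib)
  moreover have "2 powr (2 - 2/p) = (2::real) / 2 powr (2/p - 1)"
    by (simp add: powr_diff)
  ultimately show ?thesis by (simp add: gfun_def)
qed

lemma two_powr_le_two_gfun_iff:
  assumes "0 < p" "p \<le> 1"
  shows "2 powr (2 - 2/p) \<le> 2 * gfun p \<longleftrightarrow> p \<le> pstar"
proof -
  have "2 powr (2 - 2/p) \<le> 2 * gfun p \<longleftrightarrow> 0 \<le> pstar_log p"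
    using assms by (simp add: two_gfun_eq)
  also have "\<dots> \<longleftrightarrow> p \<le> pstar"
    using pstar_log_strict_decreasing[of pstar p] pstar_log_strict_decreasing[of p pstar]
      pstar_root assms by (cases p pstar rule: linorder_cases) auto
  finally show ?thesis .
qed

lemma tail_profile_le_max:
  fixes p t :: real
  assumes p: "0 < p" "p < 1" and t: "0 \<le> t" "t \<le> 1"
  shows "(1 - t) * (t powr (2/p - 1) + min t (1 - t) powr (2/p - 2) * (1 - t))
    \<le> max (gfun p + 2 powr (2 - 2/p) / 4) (2 powr (2 - 2/p))"
proof -
  have e: "2/p - 2 > 0" using p by (simp add: field_simps)
  have half: "(1/2::real) powr (2/p - 2) = 2 powr (2 - 2/p)"
    by (simp add: powr_minus_divide[symmetric] powr_divide)
  show ?thesis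
  proof (cases "1/2 \<le> t")
    case True
    have "(1 - t) powr (2/p - 2) \<le> (1/2) powr (2/p - 2)"
      using True e t by (intro powr_mono2) auto
    moreover have "(1 - t) * (1 - t) \<le> (1/2) * (1/2)" using True t by (intro mult_mono) auto
    ultimately have "(1 - t) * (1 - t) * (1 - t) powr (2/p - 2) \<le> 2 powr (2 - 2/p) / 4"
      using t mult_mono[of "(1 - t) * (1 - t)" "1/4"] unfolding half[symmetric] by force
    moreover have "(1 - t) * t powr (2/p - 1) \<le> gfun p"
      using mult_powr_le_gfun p t by simp
    moreover have "min t (1 - t) = 1 - t" using True by simp
    ultimately show ?thesis by (simp add: algebra_simps)
  next
    case False
    have "t powr (2/p - 1) = t * t powr (2/p - 2)"
      using t powr_add[of t 1 "2/p - 2"] by (cases "t = 0") auto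
    moreover have "min t (1 - t) = t" using False by simp
    ultimately have "(1 - t) * (t powr (2/p - 1) + min t (1 - t) powr (2/p - 2) * (1 - t))
        = (1 - t) * t powr (2/p - 2)"
      by (simp add: algebra_simps)
    also have "\<dots> \<le> t powr (2/p - 2)"
      using t by (intro mult_left_le_one_le) auto
    also have "\<dots> \<le> (1/2) powr (2/p - 2)"
      using False t e by (intro powr_mono2) auto
    finally show ?thesis using half by simp
  qed
qed

definition rip_factor :: "real \<Rightarrow> real" where
  "rip_factor p = (if p \<le> pstar then 2 * gfun p else 2 powr (2 - 2/p))"

lemma C1_eq: "C1 \<delta> t p = (1 - t) * t powr (2/p - 1) + rip_factor p * \<delta>"
  by (simp add: C1_def rip_factor_def)

lemma max_le_rip_factor:
  assumes "0 < p" "p \<le> 1"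
  shows "max (gfun p + 2 powr (2 - 2/p) / 4) (2 powr (2 - 2/p)) \<le> rip_factor p"
proof -
  have "0 \<le> gfun p" using assms by (simp add: gfun_def)
  thus ?thesis
    using two_powr_le_two_gfun_iff[OF assms] by (auto simp: rip_factor_def)
qed

section \<open>Masses of sorted blocks\<close>

lemma power2_sum_le_mult_sums:
  fixes b x y :: "'a \<Rightarrow> real"
  assumes "\<And>i. i \<in> I \<Longrightarrow> 0 \<le> b i \<and> (b i)^2 \<le> x i * y i"
    and "\<And>i. i \<in> I \<Longrightarrow> 0 \<le> x i" "\<And>i. i \<in> I \<Longrightarrow> 0 \<le> y i"
  shows "(\<Sum>i\<in>I. b i)^2 \<le> (\<Sum>i\<in>I. x i) * (\<Sum>i\<in>I. y i)"
proof -
  have "(\<Sum>i\<in>I. b i) \<le> (\<Sum>i\<in>I. sqrt (x i) * sqrt (y i))"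
    using assms by (intro sum_mono) (auto simp: real_le_rsqrt real_sqrt_mult[symmetric])
  moreover have "0 \<le> (\<Sum>i\<in>I. b i)" using assms by (intro sum_nonneg) auto
  ultimately have "(\<Sum>i\<in>I. b i)^2 \<le> (\<Sum>i\<in>I. sqrt (x i) * sqrt (y i))^2"
    by (intro power_mono) auto
  also have "\<dots> \<le> (\<Sum>i\<in>I. (sqrt (x i))^2) * (\<Sum>i\<in>I. (sqrt (y i))^2)"
    by (rule Cauchy_Schwarz_ineq_sum)
  also have "\<dots> = (\<Sum>i\<in>I. x i) * (\<Sum>i\<in>I. y i)"
    using assms by (simp cong: sum.cong)
  finally show ?thesis .
qed

lemma divide_powr_eq:
  fixes x k e :: real
  assumes "0 \<le> x" "0 < k"
  shows "(x / k) powr e = k powr (-e) * x powr e"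
  using assms by (simp add: powr_divide powr_minus field_simps)

locale block_masses =
  fixes m :: "nat \<Rightarrow> real" and l :: nat and t S :: real
  assumes l_pos: "1 \<le> l"
    and nonneg: "\<And>i. i \<in> {1..l} \<Longrightarrow> 0 \<le> m i"
    and le_first: "\<And>i. i \<in> {1..l} \<Longrightarrow> m i \<le> m 1"
    and sum_eq: "(\<Sum>i=1..l. m i) = S"
    and first_eq: "m 1 = t * S"
    and t_nonneg: "0 \<le> t" and t_le_1: "t \<le> 1"
begin

lemma S_nonneg: "0 \<le> S"
  using sum_eq nonneg by (metis sum_nonneg)

lemma tail_sum_eq: "(\<Sum>i=2..l. m i) = (1 - t) * S"
  using sum.atLeast_Suc_atMost[OF l_pos, of m] sum_eq first_eq
  by (simp add: numeral_2_eq_2 algebra_simps)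

lemma prev_nonneg: "i \<in> {2..l} \<Longrightarrow> 0 \<le> m (i - 1)"
  by (rule nonneg) auto

lemma prev_le_first: "i \<in> {2..l} \<Longrightarrow> m (i - 1) \<le> t * S"
  using le_first[of "i - 1"] first_eq by fastforce

lemma sum_prev_powr_le:
  assumes "1 \<le> e"
  shows "(\<Sum>i=2..l. m (i - 1) powr e)
    \<le> (t * S) powr e + (min t (1 - t) * S) powr (e - 1) * ((1 - t) * S)"
proof (cases "l = 1")
  case True
  then show ?thesis using S_nonneg t_nonneg t_le_1 by simp
next
  case False
  define \<mu> where "\<mu> = min t (1 - t) * S"
  have "(\<Sum>i=3..l. m (i - 1) powr e) \<le> (\<Sum>i=3..l. \<mu> powr (e - 1) * m (i - 1))"
  proof (rule sum_mono)
    fix i assume i: "i \<in> {3..l}"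
    have m0: "0 \<le> m (i - 1)" using prev_nonneg i by auto
    have "m (i - 1) \<le> (\<Sum>j=2..l. m j)"
      by (rule member_le_sum) (use i nonneg in auto)
    hence "m (i - 1) \<le> \<mu>"
      using prev_le_first[of i] i tail_sum_eq S_nonneg by (auto simp: \<mu>_def min_mult_distrib_right)
    hence "m (i - 1) * m (i - 1) powr (e - 1) \<le> m (i - 1) * \<mu> powr (e - 1)"
      using m0 assms by (intro mult_left_mono powr_mono2) auto
    moreover have "m (i - 1) powr e = m (i - 1) * m (i - 1) powr (e - 1)"
      using m0 powr_add[of "m (i - 1)" 1 "e - 1"] by (cases "m (i - 1) = 0") auto
    ultimately show "m (i - 1) powr e \<le> \<mu> powr (e - 1) * m (i - 1)" by (simp add: mult.commute)
  qed
  also have "\<dots> = \<mu> powr (e - 1) * (\<Sum>j\<in>(\<lambda>i. i - 1) ` {3..l}. m j)"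
    by (subst sum.reindex) (auto simp: sum_distrib_left inj_on_def)
  also have "\<dots> \<le> \<mu> powr (e - 1) * ((1 - t) * S)"
    unfolding tail_sum_eq[symmetric] by (intro mult_left_mono sum_mono2) (use nonneg in auto)
  finally have "(\<Sum>i=3..l. m (i - 1) powr e) \<le> \<mu> powr (e - 1) * ((1 - t) * S)" .
  moreover have "(\<Sum>i=2..l. m (i - 1) powr e) = m 1 powr e + (\<Sum>i=3..l. m (i - 1) powr e)"
    using sum.atLeast_Suc_atMost[of 2 l "\<lambda>i. m (i - 1) powr e"] False l_pos
    by (simp add: numeral_3_eq_3 numeral_2_eq_2)
  ultimately show ?thesis using first_eq by (simp add: \<mu>_def)
qed

lemma sum_power2_le:
  fixes b :: "nat \<Rightarrow> real" and k e :: real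
  assumes k: "0 < k" and e: "0 \<le> e"
    and b: "\<And>i. i \<in> {2..l} \<Longrightarrow> (b i)^2 \<le> (m (i - 1) / k) powr e * m i"
  shows "(\<Sum>i=2..l. (b i)^2) \<le> (1 - t) * t powr e * (k powr (-e) * S powr (e + 1))"
proof -
  have "(\<Sum>i=2..l. (b i)^2) \<le> (\<Sum>i=2..l. (t * S / k) powr e * m i)"
  proof (rule sum_mono)
    fix i assume i: "i \<in> {2..l}"
    have "(m (i - 1) / k) powr e \<le> (t * S / k) powr e"
      using prev_le_first[OF i] prev_nonneg[OF i] k e by (intro powr_mono2 divide_right_mono) auto
    hence "(m (i - 1) / k) powr e * m i \<le> (t * S / k) powr e * m i"
      using nonneg[of i] i by (intro mult_right_mono) auto
    thus "(b i)^2 \<le> (t * S / k) powr e * m i" using b[OF i] by linarith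
  qed
  also have "\<dots> = (t * S / k) powr e * ((1 - t) * S)"
    by (simp add: sum_distrib_left[symmetric] tail_sum_eq)
  also have "\<dots> = (1 - t) * t powr e * (k powr (-e) * S powr (e + 1))"
    using k t_nonneg S_nonneg
    by (simp add: divide_powr_eq powr_mult powr_add)
  finally show ?thesis .
qed

lemma power2_sum_le:
  fixes b :: "nat \<Rightarrow> real" and k e :: real
  assumes k: "0 < k" and e: "1 \<le> e"
    and b: "\<And>i. i \<in> {2..l} \<Longrightarrow> 0 \<le> b i \<and> (b i)^2 \<le> (m (i - 1) / k) powr e * m i"
  shows "(\<Sum>i=2..l. b i)^2
    \<le> (1 - t) * (t powr e + min t (1 - t) powr (e - 1) * (1 - t)) * (k powr (-e) * S powr (e + 1))"
proof -
  have "(\<Sum>i=2..l. (m (i - 1) / k) powr e) = k powr (-e) * (\<Sum>i=2..l. m (i - 1) powr e)"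
    unfolding sum_distrib_left by (rule sum.cong) (use k prev_nonneg divide_powr_eq in auto)
  moreover have "(\<Sum>i=2..l. b i)^2 \<le> (\<Sum>i=2..l. (m (i - 1) / k) powr e) * (\<Sum>i=2..l. m i)"
    using b nonneg by (intro power2_sum_le_mult_sums) auto
  ultimately have "(\<Sum>i=2..l. b i)^2 \<le> k powr (-e) * (\<Sum>i=2..l. m (i - 1) powr e) * ((1 - t) * S)"
    by (simp add: tail_sum_eq)
  also have "\<dots> \<le> k powr (-e) * ((t * S) powr e + (min t (1 - t) * S) powr (e - 1) * ((1 - t) * S))
      * ((1 - t) * S)"
    using sum_prev_powr_le[OF e] t_le_1 S_nonneg by (intro mult_right_mono mult_left_mono) auto
  also have "\<dots> = (1 - t) * (t powr e + min t (1 - t) powr (e - 1) * (1 - t)) * (k powr (-e) * S powr (e + 1))"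
  proof -
    have "S powr e = S powr (e - 1) * S" "S powr (e + 1) = S powr e * S"
      using S_nonneg powr_add[of S "e - 1" 1] powr_add[of S e 1] by (cases "S = 0"; simp)+
    thus ?thesis using t_nonneg t_le_1 S_nonneg by (simp add: powr_mult algebra_simps)
  qed
  finally show ?thesis .
qed

end

section \<open>Restricted isometries\<close>

definition dot :: "nat \<Rightarrow> (nat \<Rightarrow> real) \<Rightarrow> (nat \<Rightarrow> real) \<Rightarrow> real" where
  "dot d u v = (\<Sum>i<d. u i * v i)"

definition RIP :: "(nat \<Rightarrow> nat \<Rightarrow> real) \<Rightarrow> nat \<Rightarrow> nat \<Rightarrow> nat \<Rightarrow> real \<Rightarrow> bool" where
  "RIP A m n s \<delta> \<longleftrightarrow> (\<forall>z. sparse s n z \<longrightarrow>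
       (1 - \<delta>) * norm2sq n z \<le> norm2sq m (matvec A n z) \<and>
       norm2sq m (matvec A n z) \<le> (1 + \<delta>) * norm2sq n z)"

lemma norm2sq_nonneg: "0 \<le> norm2sq d v"
  by (simp add: norm2sq_def sum_nonneg)

lemma dot_self: "dot d u u = norm2sq d u"
  by (simp add: dot_def norm2sq_def power2_eq_square)

lemma dot_Cauchy_Schwarz: "(dot d u v)^2 \<le> norm2sq d u * norm2sq d v"
  unfolding dot_def norm2sq_def by (rule Cauchy_Schwarz_ineq_sum)

lemma matvec_lincomb:
  "matvec A n (\<lambda>j. a * u j + b * v j) = (\<lambda>i. a * matvec A n u i + b * matvec A n v i)"
  by (simp add: matvec_def algebra_simps sum.distrib sum_distrib_left)

lemma norm2sq_lincomb:
  "norm2sq d (\<lambda>i. a * u i + b * v i) = a^2 * norm2sq d u + 2 * a * b * dot d u v + b^2 * norm2sq d v"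
  by (simp add: norm2sq_def dot_def power2_eq_square algebra_simps sum.distrib sum_distrib_left)

lemma matvec_sum: "matvec A n (\<lambda>j. \<Sum>i\<in>I. V i j) = (\<lambda>r. \<Sum>i\<in>I. matvec A n (V i) r)"
  unfolding matvec_def by (simp add: sum_distrib_left) (rule ext, rule sum.swap)

lemma norm2sq_sum: "norm2sq d (\<lambda>r. \<Sum>i\<in>I. W i r) = (\<Sum>i\<in>I. \<Sum>i'\<in>I. dot d (W i) (W i'))"
proof -
  have "norm2sq d (\<lambda>r. \<Sum>i\<in>I. W i r) = (\<Sum>r<d. \<Sum>i\<in>I. \<Sum>i'\<in>I. W i r * W i' r)"
    unfolding norm2sq_def by (simp add: power2_eq_square sum_product)
  also have "\<dots> = (\<Sum>i\<in>I. \<Sum>i'\<in>I. \<Sum>r<d. W i r * W i' r)"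
    by (simp add: sum.swap[of _ "{..<d}"])
  finally show ?thesis by (simp add: dot_def)
qed

lemma norm2sq_matvec_le: "norm2sq m (matvec A n z) \<le> (\<Sum>i<m. \<Sum>j<n. (A i j)^2) * norm2sq n z"
proof -
  have "norm2sq m (matvec A n z) = (\<Sum>i<m. (\<Sum>j<n. A i j * z j)^2)"
    by (simp add: norm2sq_def matvec_def)
  also have "\<dots> \<le> (\<Sum>i<m. (\<Sum>j<n. (A i j)^2) * (\<Sum>j<n. (z j)^2))"
    by (intro sum_mono Cauchy_Schwarz_ineq_sum)
  finally show ?thesis by (simp add: norm2sq_def sum_distrib_right)
qed

lemma RIP_exists: "\<exists>\<delta>. RIP A m n s \<delta>"
proof
  define c where "c = (\<Sum>i<m. \<Sum>j<n. (A i j)^2)"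
  have c: "0 \<le> c" by (simp add: c_def sum_nonneg)
  show "RIP A m n s (c + 1)"
    unfolding RIP_def
  proof (intro allI impI conjI)
    fix z
    have "norm2sq m (matvec A n z) \<le> c * norm2sq n z"
      unfolding c_def by (rule norm2sq_matvec_le)
    also have "\<dots> \<le> (1 + (c + 1)) * norm2sq n z"
      using norm2sq_nonneg[of n z] by (intro mult_right_mono) auto
    finally show "norm2sq m (matvec A n z) \<le> (1 + (c + 1)) * norm2sq n z" .
    have "(1 - (c + 1)) * norm2sq n z \<le> 0"
      using c norm2sq_nonneg[of n z] by (simp add: mult_nonneg_nonneg)
    thus "(1 - (c + 1)) * norm2sq n z \<le> norm2sq m (matvec A n z)"
      using norm2sq_nonneg[of m "matvec A n z"] by linarith
  qed
qed

lemma RIP_ric: "RIP A m n s (ric A m n s)"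
  unfolding RIP_def
proof (intro allI impI)
  fix z assume z: "sparse s n z"
  define D where "D = {\<delta>. RIP A m n s \<delta>}"
  have r: "ric A m n s = Inf D" by (simp add: D_def ric_def RIP_def)
  have D: "D \<noteq> {}" using RIP_exists by (auto simp: D_def)
  have bounds: "(1 - \<delta>) * norm2sq n z \<le> norm2sq m (matvec A n z) \<and>
      norm2sq m (matvec A n z) \<le> (1 + \<delta>) * norm2sq n z" if "\<delta> \<in> D" for \<delta>
    using that z by (auto simp: D_def RIP_def)
  let ?N = "norm2sq n z" and ?M = "norm2sq m (matvec A n z)"
  show "(1 - ric A m n s) * ?N \<le> ?M \<and> ?M \<le> (1 + ric A m n s) * ?N"
  proof (cases "?N = 0")
    case True
    obtain \<delta> where "\<delta> \<in> D" using D by blast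
    hence "?M \<le> 0" using bounds[of \<delta>] True by simp
    thus ?thesis using True norm2sq_nonneg[of m "matvec A n z"] by simp
  next
    case False
    hence N: "0 < ?N" using norm2sq_nonneg[of n z] by simp
    \<comment> \<open>each inequality is a lower bound on \<open>\<delta>\<close>, hence survives the infimum\<close>
    have "1 - ?M / ?N \<le> Inf D"
    proof (rule cInf_greatest[OF D])
      fix \<delta> assume "\<delta> \<in> D"
      hence "(1 - \<delta>) * ?N \<le> ?M" using bounds by blast
      thus "1 - ?M / ?N \<le> \<delta>" using N by (simp add: field_simps)
    qed
    moreover have "?M / ?N - 1 \<le> Inf D"
    proof (rule cInf_greatest[OF D])
      fix \<delta> assume "\<delta> \<in> D"
      hence "?M \<le> (1 + \<delta>) * ?N" using bounds by blast
      thus "?M / ?N - 1 \<le> \<delta>" using N by (simp add: field_simps)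
    qed
    ultimately show ?thesis using N unfolding r by (simp add: field_simps)
  qed
qed

text \<open>Without \<open>0 < n\<close> every \<open>\<delta>\<close> is admissible and \<open>ric\<close> is the junk value \<open>Inf UNIV\<close>.\<close>

lemma ric_nonneg:
  assumes "0 < n" "0 < s"
  shows "0 \<le> ric A m n s"
proof -
  define e0 :: "nat \<Rightarrow> real" where "e0 = (\<lambda>j. if j = 0 then 1 else 0)"
  have "{j. j < n \<and> e0 j \<noteq> 0} = {0}" using assms by (auto simp: e0_def)
  hence "sparse s n e0" using assms by (simp add: sparse_def)
  moreover have "norm2sq n e0 = (\<Sum>j<n. if j = 0 then 1 else 0)"
    unfolding norm2sq_def e0_def by (rule sum.cong) auto
  hence "norm2sq n e0 = 1" using assms by simp
  ultimately have "0 \<le> \<delta>" if "RIP A m n s \<delta>" for \<delta>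
  proof -
    have "1 - \<delta> \<le> norm2sq m (matvec A n e0) \<and> norm2sq m (matvec A n e0) \<le> 1 + \<delta>"
      using that \<open>sparse s n e0\<close> \<open>norm2sq n e0 = 1\<close> unfolding RIP_def by force
    thus ?thesis by linarith
  qed
  thus ?thesis unfolding ric_def RIP_def[symmetric]
    using RIP_exists by (intro cInf_greatest) auto
qed

lemma RIP_dot_le:
  assumes R: "RIP A m n s \<delta>" and \<delta>: "0 \<le> \<delta>"
    and sparse: "\<And>a b. sparse s n (\<lambda>j. a * u j + b * v j)"
    and disjoint: "\<And>j. u j * v j = 0"
  shows "\<bar>dot m (matvec A n u) (matvec A n v)\<bar> \<le> \<delta> * sqrt (norm2sq n u) * sqrt (norm2sq n v)"
proof -
  define a where "a = sqrt (norm2sq n u)"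
  define b where "b = sqrt (norm2sq n v)"
  have a2: "a^2 = norm2sq n u" and b2: "b^2 = norm2sq n v"
    by (simp_all add: a_def b_def norm2sq_nonneg)
  have ab: "0 \<le> a" "0 \<le> b" by (simp_all add: a_def b_def norm2sq_nonneg)
  have uv: "dot n u v = 0" using disjoint by (simp add: dot_def del: mult_eq_0_iff)
  let ?I = "dot m (matvec A n u) (matvec A n v)"
  let ?U = "norm2sq m (matvec A n u)" and ?V = "norm2sq m (matvec A n v)"
  \<comment> \<open>polarization: compare \<open>A(bu + cav)\<close> and \<open>A(bu - cav)\<close>, two vectors of equal norm\<close>
  have polar: "c * ?I * (a * b) \<le> \<delta> * (a * b) * (a * b)" if c: "c^2 = 1" for c
  proof -
    have "norm2sq m (matvec A n (\<lambda>j. b * u j + (c * a) * v j)) \<le> (1 + \<delta>) * norm2sq n (\<lambda>j. b * u j + (c * a) * v j)"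
      "(1 - \<delta>) * norm2sq n (\<lambda>j. b * u j + (- c * a) * v j) \<le> norm2sq m (matvec A n (\<lambda>j. b * u j + (- c * a) * v j))"
      using R sparse unfolding RIP_def by blast+
    thus ?thesis
      unfolding matvec_lincomb norm2sq_lincomb uv a2[symmetric] b2[symmetric]
      using c by (simp add: power_mult_distrib power2_eq_square algebra_simps; linarith)
  qed
  show ?thesis
  proof (cases "a * b = 0")
    case True
    have "?U \<le> (1 + \<delta>) * norm2sq n u" "?V \<le> (1 + \<delta>) * norm2sq n v"
      using R sparse[of 1 0] sparse[of 0 1] unfolding RIP_def by auto
    hence "?U * ?V \<le> 0"
      using True a2 b2 norm2sq_nonneg[of m "matvec A n u"] norm2sq_nonneg[of m "matvec A n v"]
      by (auto simp: mult_nonneg_nonneg)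
    hence "?I^2 \<le> 0" using dot_Cauchy_Schwarz[of m "matvec A n u" "matvec A n v"] by linarith
    hence "?I = 0" by simp
    thus ?thesis using ab \<delta> by (simp add: a_def b_def)
  next
    case False
    hence pos: "0 < a * b" using ab by simp
    have "c * ?I \<le> \<delta> * (a * b)" if "c^2 = 1" for c
      using polar[OF that] pos by (simp add: mult_le_cancel_right_pos)
    from this[of 1] this[of "-1"] show ?thesis by (simp add: a_def b_def mult.assoc)
  qed
qed

lemma RIP_norm2sq_sum_le:
  assumes R: "RIP A m n s \<delta>" and \<delta>: "0 \<le> \<delta>" and I: "finite I"
    and sparse: "\<And>i i' a b. i \<in> I \<Longrightarrow> i' \<in> I \<Longrightarrow> sparse s n (\<lambda>j. a * V i j + b * V i' j)"
    and disjoint: "\<And>i i' j. i \<in> I \<Longrightarrow> i' \<in> I \<Longrightarrow> i \<noteq> i' \<Longrightarrow> V i j * V i' j = 0"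
  shows "norm2sq m (matvec A n (\<lambda>j. \<Sum>i\<in>I. V i j))
    \<le> (\<Sum>i\<in>I. norm2sq n (V i)) + \<delta> * (\<Sum>i\<in>I. sqrt (norm2sq n (V i)))^2"
proof -
  define a where "a i = sqrt (norm2sq n (V i))" for i
  have a2: "(a i)^2 = norm2sq n (V i)" for i by (simp add: a_def norm2sq_nonneg)
  define W where "W i = matvec A n (V i)" for i
  have "norm2sq m (matvec A n (\<lambda>j. \<Sum>i\<in>I. V i j)) = (\<Sum>i\<in>I. \<Sum>i'\<in>I. dot m (W i) (W i'))"
    unfolding matvec_sum W_def by (rule norm2sq_sum)
  also have "\<dots> \<le> (\<Sum>i\<in>I. \<Sum>i'\<in>I. (if i = i' then (a i)^2 else 0) + \<delta> * (a i * a i'))"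
  proof (intro sum_mono)
    fix i i' assume i: "i \<in> I" and i': "i' \<in> I"
    show "dot m (W i) (W i') \<le> (if i = i' then (a i)^2 else 0) + \<delta> * (a i * a i')"
    proof (cases "i = i'")
      case True
      have "sparse s n (V i)" using sparse[OF i i, of 1 0] by simp
      hence "norm2sq m (W i) \<le> (1 + \<delta>) * norm2sq n (V i)" using R unfolding RIP_def W_def by blast
      thus ?thesis using True by (simp add: dot_self a2[symmetric] power2_eq_square algebra_simps)
    next
      case False
      have "\<bar>dot m (W i) (W i')\<bar> \<le> \<delta> * a i * a i'"
        unfolding W_def a_def by (rule RIP_dot_le[OF R \<delta>]) (use sparse i i' disjoint False in auto)
      thus ?thesis using False by (simp add: mult.assoc)
    qed
  qed
  also have "\<dots> = (\<Sum>i\<in>I. (a i)^2) + \<delta> * (\<Sum>i\<in>I. a i)^2"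
    using I by (simp add: sum.distrib sum_distrib_left[symmetric] power2_eq_square sum_product)
  finally show ?thesis unfolding a2 by (simp add: a_def)
qed

section \<open>Sorted blocks of a vector\<close>

lemma powr_le_mean:
  fixes f :: "'a \<Rightarrow> real"
  assumes "finite T" "T \<noteq> {}" "0 \<le> x" "0 \<le> p" "\<And>j. j \<in> T \<Longrightarrow> x \<le> f j"
  shows "x powr p \<le> (\<Sum>j\<in>T. f j powr p) / card T"
proof -
  have "card T * x powr p = (\<Sum>j\<in>T. x powr p)" by simp
  also have "\<dots> \<le> (\<Sum>j\<in>T. f j powr p)"
    using assms by (intro sum_mono powr_mono2) auto
  finally have "card T * x powr p \<le> (\<Sum>j\<in>T. f j powr p)" .
  moreover have "0 < real (card T)" using assms by (simp add: card_gt_0_iff)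
  ultimately show ?thesis by (simp add: pos_le_divide_eq mult.commute)
qed

lemma sum_powr_le_sum_powr:
  fixes h :: "'a \<Rightarrow> real"
  assumes "finite T'" "T' \<noteq> {}" "card T = card T'" "0 \<le> p"
    and "\<And>j j'. j \<in> T \<Longrightarrow> j' \<in> T' \<Longrightarrow> \<bar>h j\<bar> \<le> \<bar>h j'\<bar>"
  shows "(\<Sum>j\<in>T. \<bar>h j\<bar> powr p) \<le> (\<Sum>j\<in>T'. \<bar>h j\<bar> powr p)"
proof -
  have "(\<Sum>j\<in>T. \<bar>h j\<bar> powr p) \<le> (\<Sum>j\<in>T. (\<Sum>j'\<in>T'. \<bar>h j'\<bar> powr p) / card T')"
    using assms by (intro sum_mono powr_le_mean) auto
  also have "\<dots> = (\<Sum>j\<in>T'. \<bar>h j\<bar> powr p)"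
    using assms by simp
  finally show ?thesis .
qed

lemma sum_power2_le_mean_powr:
  fixes h :: "'a \<Rightarrow> real"
  assumes "finite T'" "T' \<noteq> {}" "0 < p" "p \<le> 2"
    and "\<And>j j'. j \<in> T \<Longrightarrow> j' \<in> T' \<Longrightarrow> \<bar>h j\<bar> \<le> \<bar>h j'\<bar>"
  shows "(\<Sum>j\<in>T. (h j)^2)
    \<le> ((\<Sum>j\<in>T'. \<bar>h j\<bar> powr p) / card T') powr (2/p - 1) * (\<Sum>j\<in>T. \<bar>h j\<bar> powr p)"
  unfolding sum_distrib_left
proof (rule sum_mono)
  fix j assume j: "j \<in> T"
  have "(h j)^2 = \<bar>h j\<bar> powr (p + p * (2/p - 1))"
    using assms by (cases "h j = 0") (auto simp: powr_realpow[symmetric] field_simps)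
  also have "\<dots> = (\<bar>h j\<bar> powr p) powr (2/p - 1) * \<bar>h j\<bar> powr p"
    by (simp add: powr_add powr_powr)
  also have "\<dots> \<le> ((\<Sum>j\<in>T'. \<bar>h j\<bar> powr p) / card T') powr (2/p - 1) * \<bar>h j\<bar> powr p"
    using assms j by (intro mult_right_mono powr_mono2 powr_le_mean) (auto simp: field_simps)
  finally show "(h j)^2 \<le> \<dots>" .
qed

lemma sum_restr:
  fixes f :: "real \<Rightarrow> real"
  assumes "X \<subseteq> {..<n}" "f 0 = 0"
  shows "(\<Sum>i<n. f (restr X h i)) = (\<Sum>i\<in>X. f (h i))"
proof -
  have "(\<Sum>i<n. f (restr X h i)) = (\<Sum>i<n. if i \<in> X then f (h i) else 0)"
    using assms(2) by (intro sum.cong) (auto simp: restr_def)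
  also have "\<dots> = (\<Sum>i\<in>X. f (h i))"
    using assms(1) by (simp add: sum.inter_restrict[symmetric] Int_absorb1)
  finally show ?thesis .
qed

lemma pnorm_restr_powr:
  assumes "X \<subseteq> {..<n}" "0 < p"
  shows "pnorm p n (restr X h) powr p = (\<Sum>i\<in>X. \<bar>h i\<bar> powr p)"
  using sum_restr[OF assms(1), of "\<lambda>x. \<bar>x\<bar> powr p" h] assms(2)
  by (simp add: pnorm_def powr_powr sum_nonneg)

lemma norm2sq_restr:
  assumes "X \<subseteq> {..<n}"
  shows "norm2sq n (restr X h) = (\<Sum>i\<in>X. (h i)^2)"
  unfolding norm2sq_def using sum_restr[OF assms, of "\<lambda>x. x^2" h] by simp

lemma sparse_restr_lincomb:
  assumes "X \<subseteq> {..<n}" "Y \<subseteq> {..<n}"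
  shows "sparse (card X + card Y) n (\<lambda>j. a * restr X h j + b * restr Y h j)"
proof -
  have "{j. j < n \<and> a * restr X h j + b * restr Y h j \<noteq> 0} \<subseteq> X \<union> Y"
    by (auto simp: restr_def)
  moreover have "finite (X \<union> Y)" using assms finite_subset by blast
  ultimately have "card {j. j < n \<and> a * restr X h j + b * restr Y h j \<noteq> 0} \<le> card (X \<union> Y)"
    by (rule card_mono[rotated])
  also have "\<dots> \<le> card X + card Y" by (rule card_Un_le)
  finally show ?thesis unfolding sparse_def .
qed

lemma ric_norm2sq_sum_restr_le:
  fixes T :: "nat \<Rightarrow> nat set" and h :: "nat \<Rightarrow> real"
  assumes "finite I" "0 < n" "0 < k"
    and sub: "\<And>i. i \<in> I \<Longrightarrow> T i \<subseteq> {..<n}"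
    and card: "\<And>i. i \<in> I \<Longrightarrow> card (T i) = k"
    and disjoint: "\<And>i i'. i \<in> I \<Longrightarrow> i' \<in> I \<Longrightarrow> i \<noteq> i' \<Longrightarrow> T i \<inter> T i' = {}"
  shows "norm2sq m (matvec A n (\<lambda>j. \<Sum>i\<in>I. restr (T i) h j))
    \<le> (\<Sum>i\<in>I. norm2sq n (restr (T i) h))
      + ric A m n (2 * k) * (\<Sum>i\<in>I. sqrt (norm2sq n (restr (T i) h)))^2"
proof (rule RIP_norm2sq_sum_le[OF RIP_ric ric_nonneg])
  show "sparse (2 * k) n (\<lambda>j. a * restr (T i) h j + c * restr (T i') h j)"
    if "i \<in> I" "i' \<in> I" for i i' a c
    using sparse_restr_lincomb[OF sub sub, of i i' a h c] card[of i] card[of i'] that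
    by (simp add: mult_2)
  show "restr (T i) h j * restr (T i') h j = 0" if "i \<in> I" "i' \<in> I" "i \<noteq> i'" for i i' j
    using disjoint[of i i'] that by (auto simp: restr_def)
qed (use assms in auto)

lemma block_masses_if_sorted:
  fixes T :: "nat \<Rightarrow> nat set" and h :: "nat \<Rightarrow> real"
  assumes "0 < k" "1 \<le> l" "0 \<le> p" "0 \<le> t" "t \<le> 1"
    and card: "\<And>i. i \<in> {1..l} \<Longrightarrow> card (T i) = k"
    and sorted: "\<And>i j j'. i \<in> {2..l} \<Longrightarrow> j \<in> T i \<Longrightarrow> j' \<in> T (i - 1) \<Longrightarrow> \<bar>h j\<bar> \<le> \<bar>h j'\<bar>"
    and first: "(\<Sum>j\<in>T 1. \<bar>h j\<bar> powr p) = t * (\<Sum>i=1..l. \<Sum>j\<in>T i. \<bar>h j\<bar> powr p)"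
  shows "block_masses (\<lambda>i. \<Sum>j\<in>T i. \<bar>h j\<bar> powr p) l t (\<Sum>i=1..l. \<Sum>j\<in>T i. \<bar>h j\<bar> powr p)"
proof -
  define M where "M i = (\<Sum>j\<in>T i. \<bar>h j\<bar> powr p)" for i
  have M_mono: "M i \<le> M (i - 1)" if i: "i \<in> {2..l}" for i
  proof -
    have "card (T (i - 1)) = k" "card (T i) = k" using i by (auto intro!: card)
    hence "finite (T (i - 1))" "T (i - 1) \<noteq> {}" using assms by (auto intro: card_ge_0_finite)
    thus ?thesis
      unfolding M_def using \<open>card (T (i - 1)) = k\<close> \<open>card (T i) = k\<close> assms sorted[OF i]
      by (intro sum_powr_le_sum_powr) auto
  qed
  have "i \<le> l \<longrightarrow> M i \<le> M 1" if "1 \<le> i" for i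
    using that
  proof (induction i rule: nat_induct_at_least)
    case (Suc i)
    then show ?case using M_mono[of "Suc i"] by auto
  qed simp
  then show ?thesis
    using assms unfolding M_def by unfold_locales (auto simp: sum_nonneg)
qed

lemma sorted_blocks_norm2sq_le:
  fixes T :: "nat \<Rightarrow> nat set" and h :: "nat \<Rightarrow> real" and k l n :: nat
  assumes k: "0 < k" and l: "1 \<le> l" and p: "0 < p" "p < 1" and t: "0 \<le> t" "t \<le> 1"
    and sub: "\<And>i. i \<in> {1..l} \<Longrightarrow> T i \<subseteq> {..<n}"
    and card: "\<And>i. i \<in> {1..l} \<Longrightarrow> card (T i) = k"
    and disjoint: "\<And>i i'. i \<in> {1..l} \<Longrightarrow> i' \<in> {1..l} \<Longrightarrow> i \<noteq> i' \<Longrightarrow> T i \<inter> T i' = {}"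
    and sorted: "\<And>i j j'. i \<in> {2..l} \<Longrightarrow> j \<in> T i \<Longrightarrow> j' \<in> T (i - 1) \<Longrightarrow> \<bar>h j\<bar> \<le> \<bar>h j'\<bar>"
    and first: "(\<Sum>j\<in>T 1. \<bar>h j\<bar> powr p) = t * (\<Sum>i=1..l. \<Sum>j\<in>T i. \<bar>h j\<bar> powr p)"
  shows "norm2sq m (matvec A n (\<lambda>j. \<Sum>i=2..l. restr (T i) h j))
    \<le> C1 (ric A m n (2 * k)) t p * real k powr (1 - 2/p) * (\<Sum>i=1..l. \<Sum>j\<in>T i. \<bar>h j\<bar> powr p) powr (2/p)"
proof -
  define M where "M i = (\<Sum>j\<in>T i. \<bar>h j\<bar> powr p)" for i
  define S where "S = (\<Sum>i=1..l. M i)"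
  define e where "e = 2/p - 1"
  define \<delta> where "\<delta> = ric A m n (2 * k)"
  define K where "K = real k powr (-e) * S powr (e + 1)"
  interpret block_masses M l t S
    unfolding M_def S_def using block_masses_if_sorted k l p t card sorted first by simp
  have e: "1 \<le> e" using p by (simp add: e_def field_simps)
  have k': "0 < real k" using k by simp
  have "T 1 \<noteq> {}" using card[of 1] k l by force
  hence n: "0 < n" using sub[of 1] l by fastforce
  define b where "b i = sqrt (norm2sq n (restr (T i) h))" for i
  have b: "0 \<le> b i \<and> (b i)^2 \<le> (M (i - 1) / k) powr e * M i" if i: "i \<in> {2..l}" for i
  proof -
    have "(b i)^2 = (\<Sum>j\<in>T i. (h j)^2)"
      using sub[of i] i by (simp add: b_def norm2sq_restr sum_nonneg)
    also have "\<dots> \<le> (M (i - 1) / k) powr e * M i"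
    proof -
      have "card (T (i - 1)) = k" using i by (auto intro!: card)
      hence "finite (T (i - 1))" "T (i - 1) \<noteq> {}" using k by (auto intro: card_ge_0_finite)
      thus ?thesis
        unfolding M_def e_def using sum_power2_le_mean_powr[of "T (i - 1)" p "T i" h]
          \<open>card (T (i - 1)) = k\<close> p sorted[OF i] by auto
    qed
    finally show ?thesis by (simp add: b_def norm2sq_nonneg)
  qed
  have "(1 - t) * (t powr e + min t (1 - t) powr (e - 1) * (1 - t)) \<le> rip_factor p"
    using order_trans[OF tail_profile_le_max[OF p t] max_le_rip_factor[of p]] p by (simp add: e_def)
  hence "(1 - t) * (t powr e + min t (1 - t) powr (e - 1) * (1 - t)) * K \<le> rip_factor p * K"
    by (rule mult_right_mono) (simp add: K_def)
  with power2_sum_le[OF k' e b] have "(\<Sum>i=2..l. b i)^2 \<le> rip_factor p * K"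
    unfolding K_def by linarith
  moreover have "(\<Sum>i=2..l. (b i)^2) \<le> (1 - t) * t powr e * K"
    unfolding K_def using e b by (intro sum_power2_le[OF k']) auto
  moreover have "0 \<le> \<delta>" unfolding \<delta>_def using n k by (intro ric_nonneg) auto
  moreover have "norm2sq m (matvec A n (\<lambda>j. \<Sum>i=2..l. restr (T i) h j))
      \<le> (\<Sum>i=2..l. norm2sq n (restr (T i) h)) + \<delta> * (\<Sum>i=2..l. sqrt (norm2sq n (restr (T i) h)))^2"
    unfolding \<delta>_def by (rule ric_norm2sq_sum_restr_le) (use n k sub card disjoint in auto)
  hence "norm2sq m (matvec A n (\<lambda>j. \<Sum>i=2..l. restr (T i) h j))
      \<le> (\<Sum>i=2..l. (b i)^2) + \<delta> * (\<Sum>i=2..l. b i)^2"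
    by (simp add: b_def norm2sq_nonneg)
  ultimately have "norm2sq m (matvec A n (\<lambda>j. \<Sum>i=2..l. restr (T i) h j))
      \<le> (1 - t) * t powr e * K + \<delta> * (rip_factor p * K)"
    by (meson add_mono mult_left_mono order_trans)
  also have "\<dots> = C1 \<delta> t p * real k powr (1 - 2/p) * S powr (2/p)"
  proof -
    have "real k powr (-e) = real k powr (1 - 2/p)" "S powr (e + 1) = S powr (2/p)"
      by (simp_all add: e_def)
    then show ?thesis by (simp add: C1_eq K_def e_def[symmetric] algebra_simps)
  qed
  finally show ?thesis by (simp add: \<delta>_def S_def M_def)
qed

lemma block_interval_subset:
  fixes i l k :: nat
  assumes "i \<le> l"
  shows "{(i - 1) * k..<i * k} \<subseteq> {..<l * k}"
proof -
  have "i * k \<le> l * k" using assms by (rule mult_le_mono1)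
  thus ?thesis by (auto intro: less_le_trans)
qed

lemma card_block_interval: "1 \<le> (i :: nat) \<Longrightarrow> card {(i - 1) * k..<i * k} = k"
  by (cases i) auto

lemma block_intervals_disjoint:
  fixes i i' k :: nat
  assumes "i < i'"
  shows "{(i - 1) * k..<i * k} \<inter> {(i' - 1) * k..<i' * k} = {}"
  using assms mult_le_mono1[of i "i' - 1" k] by auto

lemma UN_block_intervals: "(\<Union>i\<in>{1..l::nat}. {(i - 1) * k..<i * k}) = {..<l * k}"
proof
  show "(\<Union>i\<in>{1..l}. {(i - 1) * k..<i * k}) \<subseteq> {..<l * k}"
    by (rule UN_least) (use block_interval_subset in auto)
next
  show "{..<l * k} \<subseteq> (\<Union>i\<in>{1..l}. {(i - 1) * k..<i * k})"
  proof
    fix a assume a: "a \<in> {..<l * k}"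
    hence k: "0 < k" by (cases k) auto
    have "a div k < l" using a k by (simp add: div_less_iff_less_mult)
    moreover have "a div k * k \<le> a" "a < (a div k + 1) * k"
      using div_mult_mod_eq[of a k] mod_less_divisor[OF k, of a] distrib_right[of "a div k" 1 k]
      by linarith+
    ultimately show "a \<in> (\<Union>i\<in>{1..l}. {(i - 1) * k..<i * k})"
      by (intro UN_I[of "a div k + 1"]) auto
  qed
qed

lemma bij_betw_blocks:
  assumes bij: "bij_betw \<sigma> {..<l * k} B"
    and sorted: "\<forall>i j. i \<le> j \<and> j < l * k \<longrightarrow> \<bar>h (\<sigma> j)\<bar> \<le> \<bar>h (\<sigma> i)\<bar>"
    and T: "T = (\<lambda>i. \<sigma> ` {(i - 1) * k..<i * k})"
  shows "\<And>i. i \<in> {1..l} \<Longrightarrow> T i \<subseteq> B"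
    and "\<And>i. i \<in> {1..l} \<Longrightarrow> card (T i) = k"
    and "\<And>i i'. i \<in> {1..l} \<Longrightarrow> i' \<in> {1..l} \<Longrightarrow> i \<noteq> i' \<Longrightarrow> T i \<inter> T i' = {}"
    and "(\<Union>i\<in>{1..l}. T i) = B"
    and "\<And>i j j'. i \<in> {2..l} \<Longrightarrow> j \<in> T i \<Longrightarrow> j' \<in> T (i - 1) \<Longrightarrow> \<bar>h j\<bar> \<le> \<bar>h j'\<bar>"
proof -
  have inj: "inj_on \<sigma> {..<l * k}" and img: "\<sigma> ` {..<l * k} = B"
    using bij by (auto simp: bij_betw_def)
  show "T i \<subseteq> B" if "i \<in> {1..l}" for i
    using block_interval_subset[of i l k] that img by (auto simp: T)
  show "card (T i) = k" if "i \<in> {1..l}" for i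
    using block_interval_subset[of i l k] card_block_interval[of i k] that
    by (simp add: T card_image inj_on_subset[OF inj])
  show "T i \<inter> T i' = {}" if "i \<in> {1..l}" "i' \<in> {1..l}" "i \<noteq> i'" for i i'
    using that block_interval_subset[of i l k] block_interval_subset[of i' l k]
      block_intervals_disjoint[of i i' k] block_intervals_disjoint[of i' i k]
    by (simp add: T inj_on_image_Int[OF inj, symmetric] Int_commute)
  show "(\<Union>i\<in>{1..l}. T i) = B"
    using UN_block_intervals[where l = l and k = k] img by (simp add: T image_UN[symmetric])
  show "\<bar>h j\<bar> \<le> \<bar>h j'\<bar>" if i: "i \<in> {2..l}" and j: "j \<in> T i" and j': "j' \<in> T (i - 1)" for i j j'
  proof -
    obtain a b where ab: "j = \<sigma> a" "j' = \<sigma> b"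
      and a: "a \<in> {(i - 1) * k..<i * k}" and b: "b \<in> {(i - 1 - 1) * k..<(i - 1) * k}"
      using j j' unfolding T by blast
    have "b \<le> a" using a b by simp
    moreover have "a < l * k" using a block_interval_subset[of i l k] i by auto
    ultimately show ?thesis using sorted[rule_format, of b a] unfolding ab by simp
  qed
qed

lemma power2_eq_powr_powr:
  fixes x p :: real
  assumes "0 \<le> x" "0 < p"
  shows "x^2 = (x powr p) powr (2/p)"
proof (cases "x = 0")
  case False
  have "(x powr p) powr (2/p) = x powr 2" using assms by (simp add: powr_powr)
  thus ?thesis using False assms by (simp add: powr_realpow)
qed (use assms in simp)

theorem lemma7:
  fixes k l m n :: nat and A :: "nat \<Rightarrow> nat \<Rightarrow> real"
    and x e y xs h :: "nat \<Rightarrow> real" and \<epsilon> p t :: real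
    and \<sigma> :: "nat \<Rightarrow> nat" and T :: "nat \<Rightarrow> nat set"
  assumes "k > 0" "l > 0" "m > 0" "n = (l + 1) * k"
    and "\<epsilon> \<ge> 0" "norm2 m e \<le> \<epsilon>"
    and "y = (\<lambda>i. matvec A n x i + e i)"
    and "0 < p" "p < 1"
    and "norm2 m (\<lambda>i. y i - matvec A n xs i) \<le> \<epsilon>"
    and "\<forall>\<gamma>. norm2 m (\<lambda>i. y i - matvec A n \<gamma> i) \<le> \<epsilon> \<longrightarrow> pnorm p n xs \<le> pnorm p n \<gamma>"
    and "h = (\<lambda>i. x i - xs i)"
    and "bij_betw \<sigma> {..<n - k} {k..<n}"
    and "\<forall>i j. i \<le> j \<and> j < n - k \<longrightarrow> \<bar>h (\<sigma> j)\<bar> \<le> \<bar>h (\<sigma> i)\<bar>"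
    and "T = (\<lambda>i. \<sigma> ` {(i - 1) * k ..< i * k})"
    and "0 \<le> t" "t \<le> 1"
    and "pnorm p n (restr (T 1) h) powr p = t * pnorm p n (restr {k..<n} h) powr p"
  shows "norm2sq m (matvec A n (\<lambda>j. \<Sum>i=2..l. restr (T i) h j))
         \<le> C1 (ric A m n (2 * k)) t p * real k powr (1 - 2 / p) * (pnorm p n (restr {k..<n} h))^2"
proof -
  \<comment> \<open>only the sorting of \<open>h\<close> matters\<close>
  note k = assms(1) and l = assms(2) and p = assms(8,9) and t = assms(16,17)
  have "n - k = l * k" using assms(4) by simp
  note blocks = bij_betw_blocks[OF assms(13,14)[unfolded this] assms(15)]
  have sub: "T i \<subseteq> {..<n}" if "i \<in> {1..l}" for i using blocks(1)[OF that] by auto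
  have "pnorm p n (restr {k..<n} h) powr p = (\<Sum>j\<in>{k..<n}. \<bar>h j\<bar> powr p)"
    using p by (intro pnorm_restr_powr) auto
  also have "\<dots> = (\<Sum>i=1..l. \<Sum>j\<in>T i. \<bar>h j\<bar> powr p)"
    using blocks(2,3,4) k by (simp add: sum.UNION_disjoint[symmetric] card_ge_0_finite)
  finally have tail: "pnorm p n (restr {k..<n} h) powr p = (\<Sum>i=1..l. \<Sum>j\<in>T i. \<bar>h j\<bar> powr p)" .
  have "pnorm p n (restr (T 1) h) powr p = (\<Sum>j\<in>T 1. \<bar>h j\<bar> powr p)"
    using sub[of 1] l p by (intro pnorm_restr_powr) auto
  hence first: "(\<Sum>j\<in>T 1. \<bar>h j\<bar> powr p) = t * (\<Sum>i=1..l. \<Sum>j\<in>T i. \<bar>h j\<bar> powr p)"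
    using assms(18) tail by simp
  have "pnorm p n (restr {k..<n} h)^2 = (pnorm p n (restr {k..<n} h) powr p) powr (2/p)"
    by (rule power2_eq_powr_powr) (use p in \<open>auto simp: pnorm_def\<close>)
  moreover have "norm2sq m (matvec A n (\<lambda>j. \<Sum>i=2..l. restr (T i) h j))
      \<le> C1 (ric A m n (2 * k)) t p * real k powr (1 - 2/p) * (\<Sum>i=1..l. \<Sum>j\<in>T i. \<bar>h j\<bar> powr p) powr (2/p)"
    by (rule sorted_blocks_norm2sq_le[OF k _ p t sub blocks(2,3,5) first]) (use l in simp)
  ultimately show ?thesis unfolding tail by simp
qed

end
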